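(* Let $G=(V,E)$ be a finite, connected, undirected graph with $n\ge2$ vertices and let $0<r<1$. For any $\epsilon\in(0,1)$ and any $t\ge\frac{1}{1-r}n^3/\epsilon$, the Moran process on $G$ with fitness $r$ (started from a single mutant) reaches absorption within $t$ steps with probability at least $1-\epsilon$.
   Context: The Moran process on $G$ with mutant fitness $r>0$ is the Markov chain $(X_i)_{i\ge0}$ whose state $X_i\subseteq V$ is the set of vertices occupied by mutants; every other vertex is occupied by a non-mutant of fitness $1$. Write $W(S)=r|S|+|V\setminus S|$ for the total fitness. Given $X_i=S$, one step is: choose a vertex $x$ with probability $r/W(S)$ if $x\in S$ and $1/W(S)$ if $x\notin S$; then choose a neighbour $y$ of $x$ uniformly at random; set $X_{i+1}=S\cup\{y\}$ if $x\in S$ and $X_{i+1}=S\setminus\{y\}$ if $x\notin S$. The process starts from $X_0=\{x\}$ for a single vertex $x$. Absorption means reaching $X_i=\emptyset$ or $X_i=V$. *)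

theory Defs
  imports "HOL-Probability.Probability_Mass_Function"
begin

definition conn_graph :: "'a set \<Rightarrow> ('a \<Rightarrow> 'a \<Rightarrow> bool) \<Rightarrow> bool" where
  "conn_graph V E \<longleftrightarrow> finite V
     \<and> (\<forall>x y. E x y \<longrightarrow> x \<in> V \<and> y \<in> V)
     \<and> (\<forall>x y. E x y \<longrightarrow> E y x)
     \<and> (\<forall>x. \<not> E x x)
     \<and> (\<forall>x\<in>V. \<forall>y\<in>V. E\<^sup>*\<^sup>* x y)"

definition total_fitness :: "'a set \<Rightarrow> real \<Rightarrow> 'a set \<Rightarrow> real" where
  "total_fitness V r S = r * real (card S) + real (card (V - S))"

definition moran_choose :: "'a set \<Rightarrow> real \<Rightarrow> 'a set \<Rightarrow> 'a pmf" where
  "moran_choose V r S = embed_pmf (\<lambda>x. if x \<in> V then (if x \<in> S then r else 1) / total_fitness V r S else 0)"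

definition moran_step :: "'a set \<Rightarrow> ('a \<Rightarrow> 'a \<Rightarrow> bool) \<Rightarrow> real \<Rightarrow> 'a set \<Rightarrow> 'a set pmf" where
  "moran_step V E r S =
     do { x \<leftarrow> moran_choose V r S;
          y \<leftarrow> pmf_of_set {y. E x y};
          return_pmf (if x \<in> S then insert y S else S - {y}) }"

text \<open>Joint distribution of (X_k, [X_i absorbed for some i \<le> k]) given X_0 = S0.\<close>
fun moran_dist :: "'a set \<Rightarrow> ('a \<Rightarrow> 'a \<Rightarrow> bool) \<Rightarrow> real \<Rightarrow> 'a set \<Rightarrow> nat \<Rightarrow> ('a set \<times> bool) pmf" where
  "moran_dist V E r S0 0 = return_pmf (S0, S0 = {} \<or> S0 = V)"
| "moran_dist V E r S0 (Suc k) =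
     bind_pmf (moran_dist V E r S0 k)
       (\<lambda>(S, b). map_pmf (\<lambda>S'. (S', b \<or> S' = {} \<or> S' = V)) (moran_step V E r S))"

definition absorbed_within :: "'a set \<Rightarrow> ('a \<Rightarrow> 'a \<Rightarrow> bool) \<Rightarrow> real \<Rightarrow> 'a \<Rightarrow> nat \<Rightarrow> real" where
  "absorbed_within V E r x t = measure_pmf.prob (moran_dist V E r {x} t) {p. snd p}"

end

theory Submission
  imports Defs
begin

(* We follow the potential-function argument of Diaz et al.  For a mutant set S let
     phi(S) = sum over v in S of 1/deg(v),
   so 0 <= phi <= n and phi({x}) <= 1.  A direct computation of one step shows
     E[phi(X') | X = S] = phi(S) - (1 - r)/W(S) * B(S),
   where B(S) is the sum of 1/(deg u * deg v) over the boundary edges u in S, v notin S.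
   Connectivity gives a boundary edge whenever S is neither empty nor V, hence
   B(S) >= 1/n^2; with W(S) <= n the potential drops in expectation by at least
   delta = (1 - r)/n^3 per step as long as the process is not absorbed.  An additive
   drift argument on real sequences then yields
     delta * t * P(not absorbed within t steps) <= phi({x}) <= 1,
   which is the corollary. *)


section \<open>Expectations of bounded functions on probability mass functions\<close>

lemma integrable_pmf_bounded:
  fixes f :: "'a \<Rightarrow> real"
  assumes "\<And>x. \<bar>f x\<bar> \<le> B"
  shows "integrable (measure_pmf M) f"
  by (rule measure_pmf.integrable_const_bound[where B=B]) (use assms in auto)

lemma expectation_abs_le:
  fixes f :: "'a \<Rightarrow> real"
  assumes "\<And>x. \<bar>f x\<bar> \<le> B"
  shows "\<bar>measure_pmf.expectation M f\<bar> \<le> B"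
proof -
  have "\<bar>measure_pmf.expectation M f\<bar> \<le> measure_pmf.expectation M (\<lambda>x. \<bar>f x\<bar>)"
    by (rule integral_abs_bound)
  also have "\<dots> \<le> B"
    by (rule measure_pmf.integral_le_const)
       (use assms integrable_pmf_bounded[of "\<lambda>x. \<bar>f x\<bar>" B] in auto)
  finally show ?thesis .
qed

lemma expectation_bind_pmf:
  fixes f :: "'b \<Rightarrow> real"
  assumes "\<And>x. \<bar>f x\<bar> \<le> B"
  shows "measure_pmf.expectation (bind_pmf M N) f
       = measure_pmf.expectation M (\<lambda>x. measure_pmf.expectation (N x) f)"
  unfolding measure_pmf_bind
  by (rule integral_bind[where K="count_space UNIV" and B=B and B'=1])
     (use assms measurable_measure_pmf[of N] in
       \<open>auto simp: measure_pmf.emeasure_space_1 prob_space_imp_subprob_space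
                   measure_pmf.finite_measure_axioms\<close>)

lemma expectation_bind_pmf_le:
  fixes f :: "'b \<Rightarrow> real" and g :: "'a \<Rightarrow> real"
  assumes f: "\<And>y. \<bar>f y\<bar> \<le> B" and g: "\<And>x. \<bar>g x\<bar> \<le> C"
    and step: "\<And>x. x \<in> set_pmf M \<Longrightarrow> measure_pmf.expectation (N x) f \<le> g x"
  shows "measure_pmf.expectation (bind_pmf M N) f \<le> measure_pmf.expectation M g"
  unfolding expectation_bind_pmf[OF f]
proof (rule integral_mono_AE)
  show "integrable (measure_pmf M) (\<lambda>x. measure_pmf.expectation (N x) f)"
    by (rule integrable_pmf_bounded[where B=B]) (rule expectation_abs_le[OF f])
  show "integrable (measure_pmf M) g"
    by (rule integrable_pmf_bounded[OF g])
  show "AE x in measure_pmf M. measure_pmf.expectation (N x) f \<le> g x"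
    using step by (simp add: AE_pmfI)
qed


section \<open>Additive drift for real sequences\<close>

text \<open>Here \<open>\<Phi>\<close> is the expected
  potential and \<open>P\<close> the probability of not yet being absorbed.\<close>

lemma additive_drift_bound:
  fixes \<Phi> P :: "nat \<Rightarrow> real" and d :: real
  assumes drop: "\<And>k. \<Phi> (Suc k) \<le> \<Phi> k - d * P k"
    and mono: "\<And>k. P (Suc k) \<le> P k"
    and nonneg: "\<And>k. 0 \<le> \<Phi> k" and "0 \<le> d"
  shows "d * real k * P k \<le> \<Phi> 0"
proof -
  have "\<Phi> k + d * real k * P k \<le> \<Phi> 0"
  proof (induction k)
    case 0
    then show ?case by simp
  next
    case (Suc k)
    have "d * real (Suc k) * P (Suc k) \<le> d * real (Suc k) * P k"
      using mono[of k] \<open>0 \<le> d\<close> by (intro mult_left_mono) auto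
    then show ?case using drop[of k] Suc.IH by (simp add: algebra_simps)
  qed
  then show ?thesis using nonneg[of k] by linarith
qed


section \<open>Connected graphs\<close>

definition degree :: "('a \<Rightarrow> 'a \<Rightarrow> bool) \<Rightarrow> 'a \<Rightarrow> nat" where
  "degree E x = card {y. E x y}"

locale moran_graph =
  fixes V :: "'a set" and E :: "'a \<Rightarrow> 'a \<Rightarrow> bool"
  assumes connected: "conn_graph V E" and two_vertices: "card V \<ge> 2"
begin

lemma finite_V: "finite V"
  using connected by (simp add: conn_graph_def)

lemma edge_in_V: "E x y \<Longrightarrow> x \<in> V \<and> y \<in> V"
  using connected by (simp add: conn_graph_def)

lemma edge_sym: "E x y \<Longrightarrow> E y x"
  using connected by (simp add: conn_graph_def)

lemma path_exists: "x \<in> V \<Longrightarrow> y \<in> V \<Longrightarrow> E\<^sup>*\<^sup>* x y"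
  using connected by (simp add: conn_graph_def)

lemma finite_neighbours: "finite {y. E x y}"
  using edge_in_V finite_V by (auto intro: finite_subset)

text \<open>Since there are at least two vertices and the graph is connected, every vertex has a
  neighbour; so the uniform choice of a neighbour in a Moran step is well defined.\<close>

lemma neighbours_nonempty:
  assumes "x \<in> V"
  shows "{y. E x y} \<noteq> {}"
proof -
  obtain z where z: "z \<in> V" "z \<noteq> x"
  proof (rule ccontr)
    assume "\<not> thesis"
    then have "V \<subseteq> {x}" using that by auto
    then have "card V \<le> 1" using card_mono[of "{x}" V] by simp
    with two_vertices show False by simp
  qed
  have "E\<^sup>*\<^sup>* x z" using path_exists assms z(1) by blast
  then show ?thesis using z(2) by (cases rule: converse_rtranclpE) auto
qed

lemma degree_pos: "x \<in> V \<Longrightarrow> 1 \<le> degree E x"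
  unfolding degree_def using neighbours_nonempty finite_neighbours
  by (simp add: Suc_le_eq card_gt_0_iff)

lemma degree_le_card: "degree E x \<le> card V"
  unfolding degree_def using edge_in_V finite_V by (auto intro: card_mono)

lemma boundary_edge:
  assumes "S \<subseteq> V" "S \<noteq> {}" "S \<noteq> V"
  obtains u v where "u \<in> S" "v \<in> V - S" "E u v"
proof -
  obtain a b where a: "a \<in> S" and b: "b \<in> V - S" using assms by auto
  have "E\<^sup>*\<^sup>* a b" using path_exists a b assms(1) by blast
  then have "\<exists>u v. u \<in> S \<and> v \<in> V - S \<and> E u v"
    using b by (induction rule: rtranclp_induct) (use a edge_in_V in blast)+
  then show ?thesis using that by blast
qed

end


section \<open>The one-step drift of the potential\<close>

locale moran_process = moran_graph +
  fixes r :: real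
  assumes r_pos: "0 < r" and r_less_1: "r < 1"
begin

abbreviation W :: "'a set \<Rightarrow> real" where
  "W S \<equiv> total_fitness V r S"

lemma card_split: "S \<subseteq> V \<Longrightarrow> card V = card S + card (V - S)"
  using finite_V by (metis card_Diff_subset card_mono finite_subset le_add_diff_inverse)

lemma W_pos:
  assumes "S \<subseteq> V"
  shows "0 < W S"
proof (cases "card S = 0")
  case True
  then show ?thesis
    using card_split[OF assms] two_vertices by (simp add: total_fitness_def)
next
  case False
  then show ?thesis using r_pos by (simp add: total_fitness_def add_pos_nonneg)
qed

lemma W_le_card:
  assumes "S \<subseteq> V"
  shows "W S \<le> real (card V)"
proof -
  have "r * real (card S) \<le> real (card S)"
    using r_less_1 by (simp add: mult_left_le_one_le r_pos less_imp_le)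
  then show ?thesis unfolding total_fitness_def using card_split[OF assms] by simp
qed

definition choice_weight :: "'a set \<Rightarrow> 'a \<Rightarrow> real" where
  "choice_weight S v = (if v \<in> V then (if v \<in> S then r else 1) / W S else 0)"

lemma choice_weight_nonneg: "S \<subseteq> V \<Longrightarrow> 0 \<le> choice_weight S v"
  using W_pos[of S] r_pos by (simp add: choice_weight_def)

lemma choice_weight_sum:
  assumes "S \<subseteq> V"
  shows "(\<Sum>v\<in>V. choice_weight S v) = 1"
proof -
  have "(\<Sum>v\<in>V. choice_weight S v) = (\<Sum>v\<in>V. (if v \<in> S then r else 1)) / W S"
    unfolding choice_weight_def sum_divide_distrib by simp
  also have "(\<Sum>v\<in>V. (if v \<in> S then r else 1)) = W S"
    using finite_V assms by (simp add: sum.If_cases Int_absorb1 Diff_eq total_fitness_def)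
  finally show ?thesis using W_pos[OF assms] by simp
qed

lemma pmf_moran_choose:
  assumes "S \<subseteq> V"
  shows "pmf (moran_choose V r S) v = choice_weight S v"
proof -
  have "(\<integral>\<^sup>+x. ennreal (choice_weight S x) \<partial>count_space UNIV) = (\<Sum>x\<in>V. ennreal (choice_weight S x))"
    by (rule nn_integral_count_space') (auto simp: finite_V choice_weight_def)
  also have "\<dots> = 1"
    using choice_weight_nonneg[OF assms] choice_weight_sum[OF assms] by (simp add: sum_ennreal)
  finally show ?thesis
    unfolding moran_choose_def using pmf_embed_pmf[of "choice_weight S"] choice_weight_nonneg[OF assms]
    by (simp add: choice_weight_def[abs_def])
qed

lemma set_moran_choose: "S \<subseteq> V \<Longrightarrow> set_pmf (moran_choose V r S) \<subseteq> V"
  using pmf_moran_choose by (auto simp: set_pmf_iff choice_weight_def split: if_splits)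

lemma set_moran_step: "S \<subseteq> V \<Longrightarrow> S' \<in> set_pmf (moran_step V E r S) \<Longrightarrow> S' \<subseteq> V"
  using set_moran_choose neighbours_nonempty finite_neighbours edge_in_V
  by (auto simp: moran_step_def split: if_splits)

definition potential :: "'a set \<Rightarrow> real" where
  "potential S = (\<Sum>v\<in>S \<inter> V. 1 / real (degree E v))"

lemma inv_degree_bounds: "0 \<le> 1 / real (degree E v)" "1 / real (degree E v) \<le> 1"
  by (cases "degree E v = 0"; simp)+

lemma potential_bounds: "0 \<le> potential S" "potential S \<le> real (card V)"
proof -
  show "0 \<le> potential S"
    unfolding potential_def by (intro sum_nonneg) (simp add: inv_degree_bounds)
  have "potential S \<le> real (card (S \<inter> V))"
    unfolding potential_def using sum_mono[of "S \<inter> V", OF inv_degree_bounds(2)] by simp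
  also have "\<dots> \<le> real (card V)" using finite_V by (simp add: card_mono)
  finally show "potential S \<le> real (card V)" .
qed

lemma potential_abs_le: "\<bar>potential S\<bar> \<le> real (card V)"
  using potential_bounds[of S] by simp

definition potential_change :: "'a set \<Rightarrow> 'a \<Rightarrow> 'a \<Rightarrow> real" where
  "potential_change S x y =
     (if x \<in> S then (if y \<in> S then 0 else 1 / real (degree E y))
      else (if y \<in> S then - (1 / real (degree E y)) else 0))"

lemma potential_update:
  assumes "y \<in> V"
  shows "potential (if x \<in> S then insert y S else S - {y}) = potential S + potential_change S x y"
proof -
  have "insert y S \<inter> V = insert y (S \<inter> V)" "(S - {y}) \<inter> V = S \<inter> V - {y}"
    using assms by auto
  then show ?thesis
    using finite_V by (auto simp: potential_def potential_change_def insert_absorb sum_diff1)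
qed

lemma potential_change_sum_mutant:
  assumes "x \<in> S"
  shows "(\<Sum>y\<in>{y. E x y}. potential_change S x y) = (\<Sum>y\<in>{y\<in>V - S. E x y}. 1 / real (degree E y))"
proof -
  have "(\<Sum>y\<in>{y. E x y}. potential_change S x y)
      = (\<Sum>y\<in>{y. E x y}. if y \<notin> S then 1 / real (degree E y) else 0)"
    using assms by (intro sum.cong) (auto simp: potential_change_def)
  also have "\<dots> = (\<Sum>y\<in>{y\<in>{y. E x y}. y \<notin> S}. 1 / real (degree E y))"
    by (rule sum.inter_filter[symmetric]) (rule finite_neighbours)
  also have "{y\<in>{y. E x y}. y \<notin> S} = {y\<in>V - S. E x y}" using edge_in_V by auto
  finally show ?thesis .
qed

lemma potential_change_sum_resident:
  assumes "x \<notin> S"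
  shows "(\<Sum>y\<in>{y. E x y}. potential_change S x y) = - (\<Sum>y\<in>{y\<in>S. E x y}. 1 / real (degree E y))"
proof -
  have "(\<Sum>y\<in>{y. E x y}. potential_change S x y)
      = - (\<Sum>y\<in>{y. E x y}. if y \<in> S then 1 / real (degree E y) else 0)"
    using assms by (simp add: potential_change_def sum_negf[symmetric] if_distrib cong: if_cong)
  also have "(\<Sum>y\<in>{y. E x y}. if y \<in> S then 1 / real (degree E y) else 0)
      = (\<Sum>y\<in>{y\<in>{y. E x y}. y \<in> S}. 1 / real (degree E y))"
    by (rule sum.inter_filter[symmetric]) (rule finite_neighbours)
  also have "{y\<in>{y. E x y}. y \<in> S} = {y\<in>S. E x y}" using edge_in_V by auto
  finally show ?thesis .
qed

lemma expected_potential_offspring: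
  assumes "x \<in> V"
  shows "measure_pmf.expectation (pmf_of_set {y. E x y})
           (\<lambda>y. potential (if x \<in> S then insert y S else S - {y}))
       = potential S + (\<Sum>y\<in>{y. E x y}. potential_change S x y) / real (degree E x)"
proof -
  have "measure_pmf.expectation (pmf_of_set {y. E x y})
          (\<lambda>y. potential (if x \<in> S then insert y S else S - {y}))
      = (\<Sum>y\<in>{y. E x y}. potential S + potential_change S x y) / real (degree E x)"
    using finite_neighbours neighbours_nonempty[OF assms]
    by (subst integral_pmf_of_set) (auto simp: degree_def edge_in_V potential_update intro!: sum.cong)
  also have "\<dots> = potential S + (\<Sum>y\<in>{y. E x y}. potential_change S x y) / real (degree E x)"
    using degree_pos[OF assms] by (simp add: sum.distrib degree_def[symmetric] add_divide_distrib)
  finally show ?thesis .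
qed

definition boundary_weight :: "'a set \<Rightarrow> real" where
  "boundary_weight S = (\<Sum>x\<in>S. \<Sum>y\<in>{y\<in>V - S. E x y}. 1 / (real (degree E x) * real (degree E y)))"

lemma boundary_weight_nonneg: "0 \<le> boundary_weight S"
  unfolding boundary_weight_def by (intro sum_nonneg) auto

text \<open>A single boundary edge already contributes at least \<open>1/n\<^sup>2\<close>.\<close>

lemma boundary_weight_lower:
  assumes "S \<subseteq> V" "S \<noteq> {}" "S \<noteq> V"
  shows "1 / (real (card V) * real (card V)) \<le> boundary_weight S"
proof -
  let ?h = "\<lambda>x y. 1 / (real (degree E x) * real (degree E y))"
  obtain u v where uv: "u \<in> S" "v \<in> V - S" "E u v"
    using boundary_edge[OF assms] .
  have "1 / (real (card V) * real (card V)) \<le> ?h u v"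
    using degree_pos[of u] degree_pos[of v] degree_le_card[of u] degree_le_card[of v] uv assms(1)
    by (intro divide_left_mono mult_mono) auto
  also have "\<dots> \<le> (\<Sum>y\<in>{y\<in>V - S. E u y}. ?h u y)"
    by (rule member_le_sum) (use uv finite_V in auto)
  also have "\<dots> \<le> boundary_weight S"
    unfolding boundary_weight_def
    by (rule member_le_sum[where f="\<lambda>x. \<Sum>y\<in>{y\<in>V - S. E x y}. ?h x y"])
       (use uv assms(1) finite_V in \<open>auto intro!: sum_nonneg intro: finite_subset\<close>)
  finally show ?thesis .
qed

text \<open>The drift identity: mutants push the potential up at rate \<open>r\<close>, residents push it
  down at rate \<open>1\<close>, and by symmetry of the edges both act on the same boundary weight.\<close>

lemma expected_potential_step:
  assumes "S \<subseteq> V"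
  shows "measure_pmf.expectation (moran_step V E r S) potential
       = potential S - (1 - r) / W S * boundary_weight S"
proof -
  let ?h = "\<lambda>x y. 1 / (real (degree E x) * real (degree E y))"
  let ?t = "\<lambda>x. choice_weight S x * ((\<Sum>y\<in>{y. E x y}. potential_change S x y) / real (degree E x))"
  have fin_S: "finite S" using assms finite_V finite_subset by blast
  have "measure_pmf.expectation (moran_step V E r S) potential
      = measure_pmf.expectation (moran_choose V r S)
          (\<lambda>x. measure_pmf.expectation (pmf_of_set {y. E x y})
                 (\<lambda>y. potential (if x \<in> S then insert y S else S - {y})))"
    unfolding moran_step_def
    by (simp add: expectation_bind_pmf[OF potential_abs_le]
                  expectation_bind_pmf[where B="real (card V)"] potential_abs_le)
  also have "\<dots> = (\<Sum>x\<in>V. (potential S + (\<Sum>y\<in>{y. E x y}. potential_change S x y) / real (degree E x))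
                          * choice_weight S x)"
    using set_moran_choose[OF assms] pmf_moran_choose[OF assms] expected_potential_offspring
    by (subst integral_measure_pmf_real[of V]) (auto simp: finite_V intro!: sum.cong)
  also have "\<dots> = potential S + (\<Sum>x\<in>V. ?t x)"
    using choice_weight_sum[OF assms]
    by (simp add: algebra_simps sum.distrib sum_distrib_left[symmetric])
  also have "(\<Sum>x\<in>V. ?t x) = (\<Sum>x\<in>S. ?t x) + (\<Sum>x\<in>V - S. ?t x)"
    using sum.subset_diff[OF assms finite_V] by (simp add: add.commute)
  also have "(\<Sum>x\<in>S. ?t x) = r / W S * boundary_weight S"
    using assms
    by (auto simp: boundary_weight_def potential_change_sum_mutant choice_weight_def
                   sum_divide_distrib sum_distrib_left intro!: sum.cong)
  also have "(\<Sum>x\<in>V - S. ?t x) = - (1 / W S) * (\<Sum>x\<in>V - S. \<Sum>y\<in>{y\<in>S. E x y}. ?h x y)"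
    by (auto simp: potential_change_sum_resident choice_weight_def sum_divide_distrib
                   sum_distrib_left sum_negf intro!: sum.cong)
  also have "(\<Sum>x\<in>V - S. \<Sum>y\<in>{y\<in>S. E x y}. ?h x y) = (\<Sum>y\<in>S. \<Sum>x\<in>{x\<in>V - S. E x y}. ?h x y)"
    by (rule sum.swap_restrict) (use finite_V fin_S in auto)
  also have "\<dots> = boundary_weight S"
    unfolding boundary_weight_def using edge_sym
    by (intro sum.cong refl) (auto simp: mult.commute intro!: sum.cong)
  finally show ?thesis by (simp add: algebra_simps diff_divide_distrib)
qed

definition drift_rate :: real where
  "drift_rate = (1 - r) / real (card V) ^ 3"

lemma drift_rate_nonneg: "0 \<le> drift_rate"
  using r_less_1 by (simp add: drift_rate_def)

lemma potential_step_nonincreasing: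
  assumes "S \<subseteq> V"
  shows "measure_pmf.expectation (moran_step V E r S) potential \<le> potential S"
  using expected_potential_step[OF assms] boundary_weight_nonneg[of S] W_pos[OF assms] r_less_1
  by simp

lemma potential_step_decrease:
  assumes "S \<subseteq> V" "S \<noteq> {}" "S \<noteq> V"
  shows "measure_pmf.expectation (moran_step V E r S) potential \<le> potential S - drift_rate"
proof -
  let ?n = "real (card V)"
  have n: "0 < ?n" using two_vertices by simp
  have "drift_rate = ((1 - r) / ?n) * (1 / (?n * ?n))"
    by (simp add: drift_rate_def power3_eq_cube)
  also have "\<dots> \<le> ((1 - r) / W S) * boundary_weight S"
    using boundary_weight_lower[OF assms] W_pos[OF assms(1)] W_le_card[OF assms(1)] r_less_1 n
    by (intro mult_mono divide_left_mono) auto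
  finally show ?thesis using expected_potential_step[OF assms(1)] by simp
qed

end


section \<open>The process started from a single mutant\<close>

locale moran_run = moran_process +
  fixes x0 :: 'a
  assumes x0_in_V: "x0 \<in> V"
begin

abbreviation state_dist :: "nat \<Rightarrow> ('a set \<times> bool) pmf" where
  "state_dist k \<equiv> moran_dist V E r {x0} k"

definition expected_potential :: "nat \<Rightarrow> real" where
  "expected_potential k = measure_pmf.expectation (state_dist k) (\<lambda>p. potential (fst p))"

definition survival :: "nat \<Rightarrow> real" where
  "survival k = measure_pmf.expectation (state_dist k) (\<lambda>p. of_bool (\<not> snd p))"

lemma reachable_states:
  "p \<in> set_pmf (state_dist k) \<Longrightarrow> fst p \<subseteq> V \<and> (\<not> snd p \<longrightarrow> fst p \<noteq> {} \<and> fst p \<noteq> V)"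
proof (induction k arbitrary: p)
  case 0
  then show ?case using x0_in_V by auto
next
  case (Suc k)
  then obtain S b S' where Sb: "(S, b) \<in> set_pmf (state_dist k)"
    and S': "S' \<in> set_pmf (moran_step V E r S)" and p: "p = (S', b \<or> S' = {} \<or> S' = V)"
    by auto
  have "S \<subseteq> V" using Suc.IH[OF Sb] by simp
  then have "S' \<subseteq> V" using set_moran_step S' by blast
  then show ?case using p by auto
qed

lemma expected_potential_drop:
  "expected_potential (Suc k) \<le> expected_potential k - drift_rate * survival k"
proof -
  let ?g = "\<lambda>p. potential (fst p) - drift_rate * of_bool (\<not> snd p)"
  have g_bound: "\<bar>?g p\<bar> \<le> real (card V) + drift_rate" for p
    using potential_bounds[of "fst p"] drift_rate_nonneg by auto
  have "expected_potential (Suc k) \<le> measure_pmf.expectation (state_dist k) ?g"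
    unfolding expected_potential_def moran_dist.simps
  proof (rule expectation_bind_pmf_le[OF _ g_bound])
    show "\<bar>potential (fst p)\<bar> \<le> real (card V)" for p :: "'a set \<times> bool"
      by (rule potential_abs_le)
    fix q assume q: "q \<in> set_pmf (state_dist k)"
    obtain S b where q_eq: "q = (S, b)" by (cases q)
    have S: "S \<subseteq> V" "\<not> b \<Longrightarrow> S \<noteq> {} \<and> S \<noteq> V"
      using reachable_states[OF q] q_eq by auto
    have "measure_pmf.expectation (moran_step V E r S) potential \<le> potential S - drift_rate * of_bool (\<not> b)"
      using potential_step_nonincreasing[OF S(1)] potential_step_decrease[OF S(1)] S(2) by (cases b) auto
    then show "measure_pmf.expectation
        ((\<lambda>(S, b). map_pmf (\<lambda>S'. (S', b \<or> S' = {} \<or> S' = V)) (moran_step V E r S)) q)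
        (\<lambda>p. potential (fst p)) \<le> ?g q"
      by (simp add: q_eq)
  qed
  also have "\<dots> = expected_potential k - drift_rate * survival k"
  proof -
    have "integrable (measure_pmf (state_dist k)) (\<lambda>p. potential (fst p))"
      by (rule integrable_pmf_bounded[OF potential_abs_le])
    moreover have "integrable (measure_pmf (state_dist k)) (\<lambda>p. of_bool (\<not> snd p) :: real)"
      by (rule integrable_pmf_bounded[where B=1]) simp
    ultimately show ?thesis
      unfolding expected_potential_def survival_def by simp
  qed
  finally show ?thesis .
qed

text \<open>Absorption is permanent in the bookkeeping of \<open>moran_dist\<close>, so survival decreases.\<close>

lemma survival_mono: "survival (Suc k) \<le> survival k"
proof -
  have step: "measure_pmf.expectation
      ((\<lambda>(S, b). map_pmf (\<lambda>S'. (S', b \<or> S' = {} \<or> S' = V)) (moran_step V E r S)) q)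
      (\<lambda>p. of_bool (\<not> snd p)) \<le> (of_bool (\<not> snd q) :: real)" for q
  proof (cases q)
    case (Pair S b)
    have "\<bar>measure_pmf.expectation (moran_step V E r S) (\<lambda>S'. of_bool (S' \<noteq> {} \<and> S' \<noteq> V)) :: real\<bar> \<le> 1"
      by (rule expectation_abs_le) simp
    then show ?thesis using Pair by (cases b) simp_all
  qed
  show ?thesis
    unfolding survival_def moran_dist.simps
    by (rule expectation_bind_pmf_le[where B=1 and C=1]) (simp, simp, rule step)
qed

lemma expected_potential_nonneg: "0 \<le> expected_potential k"
  unfolding expected_potential_def by (rule integral_nonneg_AE) (simp add: potential_bounds)

lemma expected_potential_initial: "expected_potential 0 \<le> 1"
  unfolding expected_potential_def using inv_degree_bounds(2)[of x0] x0_in_V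
  by (simp add: potential_def)

lemma survival_nonneg: "0 \<le> survival k"
  unfolding survival_def by (rule integral_nonneg_AE) simp

lemma survival_eq: "survival k = 1 - absorbed_within V E r x0 k"
proof -
  have ind: "(\<lambda>p. of_bool (\<not> snd p)) = (indicator {p. \<not> snd p} :: _ \<Rightarrow> real)"
    by (rule ext) (simp add: indicator_def)
  have "survival k = measure_pmf.prob (state_dist k) {p. \<not> snd p}"
    unfolding survival_def ind by simp
  also have "{p. \<not> snd p} = UNIV - {p. snd p}" by auto
  finally show ?thesis
    using measure_pmf.prob_compl[of "{p. snd p}" "state_dist k"] by (simp add: absorbed_within_def)
qed

lemma survival_bound: "drift_rate * real t * survival t \<le> 1"
  using additive_drift_bound[where \<Phi>=expected_potential and P=survival and d=drift_rate,
      OF expected_potential_drop survival_mono expected_potential_nonneg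
      drift_rate_nonneg] expected_potential_initial
  by (meson order_trans)

end


theorem corollary6:
  fixes V :: "'a set" and E :: "'a \<Rightarrow> 'a \<Rightarrow> bool" and r \<epsilon> :: real and t :: nat and x :: 'a
  assumes "conn_graph V E" and "card V \<ge> 2"
    and "0 < r" and "r < 1"
    and "0 < \<epsilon>" and "\<epsilon> < 1"
    and "real t \<ge> (1 / (1 - r)) * real (card V) ^ 3 / \<epsilon>"
    and "x \<in> V"
  shows "absorbed_within V E r x t \<ge> 1 - \<epsilon>"
proof -
  interpret moran_run V E r x using assms by unfold_locales auto
  have n: "0 < real (card V)" using assms(2) by simp
  have "1 \<le> \<epsilon> * (drift_rate * real t)"
    using assms(4,5,7) n by (simp add: drift_rate_def field_simps)
  then have "survival t \<le> \<epsilon> * (drift_rate * real t) * survival t"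
    using mult_right_mono[OF _ survival_nonneg] by fastforce
  also have "\<dots> \<le> \<epsilon>"
    using mult_left_mono[OF survival_bound, of \<epsilon>] assms(5) by (simp add: mult.assoc)
  finally show ?thesis using survival_eq by simp
qed

end
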